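(* Let $N\ge 2$ and let $A\in \mathrm{Mat}_N^+(\mathbb{Z})$. Suppose the characteristic polynomial of $A$ is irreducible in $\mathbb{Q}[x]$ and that the eigenvalues of $A$ are pairwise distinct positive real numbers. Then for every $\varepsilon>0$ there are infinitely many points $P\in \mathbb{G}_m^N(\mathbb{Q})$ with \[ 0<\hat h_A^+(P)<\varepsilon . \]
   Context: $\mathrm{Mat}_N^+(\mathbb{Z})$ denotes the set of $N\times N$ integer matrices with nonzero determinant. For $A=(a_{ij})\in \mathrm{Mat}_N^+(\mathbb{Z})$, the monomial map $\varphi_A:\mathbb{G}_m^N(\overline{\mathbb{Q}})\to\mathbb{G}_m^N(\overline{\mathbb{Q}})$ is $\varphi_A(x_1,\dots,x_N)=\bigl(\prod_{j} x_j^{a_{1j}},\dots,\prod_j x_j^{a_{Nj}}\bigr)$; note $\varphi_A^n=\varphi_{A^n}$. For $P=(x_1,\dots,x_N)\in\mathbb{G}_m^N(\overline{\mathbb{Q}})$ with coordinates in a number field $K$, $h(P)=\sum_{v\in M_K}\max\{0,\log\|x_1\|_v,\dots,\log\|x_N\|_v\}$ is the absolute logarithmic Weil height (i.e. the height of $(1:x_1:\dots:x_N)\in\mathbb{P}^N$, with normalized absolute values so it is independent of $K$). Let $\delta_A$ be the spectral radius of $A$ and let $\ell_A+1$ be the largest size of a Jordan block of $A$ belonging to an eigenvalue of modulus $\delta_A$. The canonical height is \[ \hat h_A^+(P)=\limsup_{n\to\infty}\frac{h(\varphi_A^n(P))}{n^{\ell_A}\delta_A^n}. \] *)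

theory Defs
  imports "Jordan_Normal_Form.Spectral_Radius" "HOL-Library.Liminf_Limsup" "HOL-Library.Extended_Real"
begin

definition cmat :: "int mat \<Rightarrow> complex mat" where
  "cmat A = map_mat of_int A"

definition delta_A :: "int mat \<Rightarrow> real" where
  "delta_A A = spectral_radius (cmat A)"

definition ell_A :: "int mat \<Rightarrow> nat" where
  "ell_A A = Max {k - 1 | k a n_as. jordan_nf (cmat A) n_as \<and> (k, a) \<in> set n_as
                                     \<and> cmod a = delta_A A}"

text \<open>Monomial map phi_A on points of G_m^N(Q), represented as rational vectors of length N.\<close>
definition mono_map :: "int mat \<Rightarrow> rat vec \<Rightarrow> rat vec" where
  "mono_map A P = vec (dim_row A) (\<lambda>i. \<Prod>j<dim_col A. (P $ j) powi (A $$ (i, j)))"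

text \<open>Absolute logarithmic Weil height of (1 : x_1 : ... : x_N) for rational x_i:
  log of the max of the absolute values of a primitive integer representative
  (d, d x_1, ..., d x_N), d = lcm of denominators.\<close>
definition weil_height :: "rat vec \<Rightarrow> real" where
  "weil_height P =
     (let d = Lcm ((\<lambda>i. snd (quotient_of (P $ i))) ` {..<dim_vec P})
      in ln (Max (insert (real_of_int d)
                   ((\<lambda>i. real_of_rat \<bar>rat_of_int d * P $ i\<bar>) ` {..<dim_vec P}))))"

definition canon_height :: "int mat \<Rightarrow> rat vec \<Rightarrow> ereal" where
  "canon_height A P = limsup (\<lambda>n. ereal (weil_height ((mono_map A ^^ n) P)
                                       / (real n ^ ell_A A * delta_A A ^ n)))"

end

theory Submission
  imports Defs "HOL-Computational_Algebra.Field_as_Ring"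
begin

(*
  For b in Z^N let P_b = (2^b_1, ..., 2^b_N). Then phi_A(P_b) = P_(Ab) and
  h(P_b) = log 2 * (max(0, max_i b_i) + max(0, max_i (-b_i))).  As the eigenvalues of A are
  distinct and positive, A is diagonalisable with a simple dominant eigenvalue delta, so
  ell_A = 0 and A^n b / delta^n converges to c(b) v, where v is a dominant eigenvector and
  c(b) the dominant eigen-coordinate of b.  Hence hat h_A^+(P_b) is positive and bounded by a
  constant times |c(b)| as soon as c(b) is nonzero.

  Irreducibility of the characteristic polynomial makes c injective on Z^N: if c(b) = 0, the
  dominant left eigenvector annihilates b, Ab, ..., A^(N-1) b, so p(A) b = 0 for a nonzero
  rational polynomial p of degree < N; no eigenvalue is a root of p, hence b = 0.  Dirichlet's
  approximation theorem applied to c on Z e_1 + Z e_2 then gives b with |c(b)| positive but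
  arbitrarily small.
*)

section \<open>Heights of points with power-of-two coordinates\<close>

definition exponent_height :: "nat \<Rightarrow> (nat \<Rightarrow> real) \<Rightarrow> real" where
  "exponent_height N f = max 0 (Max (f ` {..<N})) + max 0 (Max ((\<lambda>i. - f i) ` {..<N}))"

definition pow2_point :: "int vec \<Rightarrow> rat vec" where
  "pow2_point b = vec (dim_vec b) (\<lambda>i. 2 powi (b $ i))"

lemma denominator_pow2: "snd (quotient_of ((2::rat) powi e)) = 2 ^ nat (- e)"
proof (cases "e \<ge> 0")
  case True
  then have "(2::rat) powi e = rat_of_int (2 ^ nat e)"
    by (simp add: power_int_def)
  then show ?thesis using True by (subst \<open>_ = _\<close>, subst quotient_of_rat_of_int) simp
next
  case False
  then have "(2::rat) powi e = Rat.Fract 1 (2 ^ nat (- e))"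
    by (simp add: power_int_def Fract_of_int_quotient inverse_eq_divide power_one_over)
  then show ?thesis by (simp add: quotient_of_Fract normalize_def)
qed

lemma Lcm_pow2:
  assumes "finite I" "I \<noteq> {}"
  shows "Lcm ((\<lambda>i. (2::int) ^ f i) ` I) = 2 ^ Max (f ` I)"
proof (rule Lcm_eqI)
  show "b dvd 2 ^ Max (f ` I)" if "b \<in> (\<lambda>i. (2::int) ^ f i) ` I" for b
    using that assms by (auto intro!: le_imp_power_dvd)
  show "2 ^ Max (f ` I) dvd c" if "\<And>b. b \<in> (\<lambda>i. (2::int) ^ f i) ` I \<Longrightarrow> b dvd c" for c
  proof -
    have "Max (f ` I) \<in> f ` I" using assms by auto
    then obtain i where "i \<in> I" "Max (f ` I) = f i" by auto
    then show ?thesis using that by auto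
  qed
qed simp

lemma ln_power_int_2: "ln ((2::real) powi k) = of_int k * ln 2"
  by (cases "k \<ge> 0") (simp_all add: power_int_def ln_inverse ln_realpow ln_div)

lemma of_rat_power_int: "(of_rat (x powi k) :: real) = of_rat x powi k"
  by (simp add: power_int_def of_rat_power of_rat_inverse)

lemma Max_add_left:
  assumes "finite S" "S \<noteq> {}"
  shows "Max ((\<lambda>x. (c::int) + x) ` S) = c + Max S"
  using assms by (intro mono_Max_commute[symmetric]) (auto intro: monoI)

lemma of_int_Max:
  assumes "finite S" "S \<noteq> {}"
  shows "real_of_int (Max S) = Max (real_of_int ` S)"
  using assms by (intro mono_Max_commute) (auto intro: monoI)

lemma Lcm_denominators_pow2_point:
  assumes "dim_vec b = N" "N > 0"
  shows "Lcm ((\<lambda>i. snd (quotient_of (pow2_point b $ i))) ` {..<N})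
    = 2 ^ nat (Max ((\<lambda>i. - b $ i) ` {..<N}))"
proof -
  have ne: "{..<N} \<noteq> {}" using assms by auto
  have "Max ((\<lambda>i. nat (- b $ i)) ` {..<N}) = nat (Max ((\<lambda>i. - b $ i) ` {..<N}))"
    using ne by (subst mono_Max_commute[of nat]) (auto intro: monoI simp: image_image)
  then show ?thesis
    using Lcm_pow2[OF finite_lessThan ne, of "\<lambda>i. nat (- b $ i)"] assms
    by (simp add: pow2_point_def denominator_pow2)
qed

lemma weil_height_pow2_point:
  assumes "dim_vec b = N" "N > 0"
  shows "weil_height (pow2_point b) = ln 2 * exponent_height N (\<lambda>i. of_int (b $ i))"
proof -
  let ?I = "{..<N}"
  have fin: "finite ?I" and ne: "?I \<noteq> {}" using assms by auto
  define D where "D = max 0 (Max ((\<lambda>i. - b $ i) ` ?I))"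
  define E where "E = max 0 (Max ((\<lambda>i. b $ i) ` ?I))"
  have dim: "dim_vec (pow2_point b) = N"
    using assms by (simp add: pow2_point_def)
  have coord: "i < N \<Longrightarrow> pow2_point b $ i = 2 powi (b $ i)" for i
    using assms by (simp add: pow2_point_def)
  have lcm: "Lcm ((\<lambda>i. snd (quotient_of (pow2_point b $ i))) ` ?I) = 2 ^ nat D"
    using Lcm_denominators_pow2_point[OF assms] by (simp add: D_def)
  have scaled: "real_of_rat \<bar>rat_of_int (2 ^ nat D) * pow2_point b $ i\<bar> = 2 powi (D + b $ i)"
    if "i < N" for i
  proof -
    have "real_of_rat \<bar>rat_of_int (2 ^ nat D) * pow2_point b $ i\<bar> = 2 ^ nat D * (2::real) powi (b $ i)"
      using that by (simp add: coord of_rat_mult of_rat_power_int of_rat_power flip: abs_of_rat)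
    also have "\<dots> = 2 powi (D + b $ i)"
      by (simp add: power_int_add D_def flip: power_int_of_nat)
    finally show ?thesis .
  qed
  have "weil_height (pow2_point b) = ln (Max (insert (real_of_int (2 ^ nat D))
          ((\<lambda>i. real_of_rat \<bar>rat_of_int (2 ^ nat D) * pow2_point b $ i\<bar>) ` ?I)))"
    unfolding weil_height_def Let_def dim lcm ..
  also have "\<dots> = ln (Max ((\<lambda>k. (2::real) powi k) ` insert D ((\<lambda>i. D + b $ i) ` ?I)))"
  proof -
    have "(\<lambda>i. real_of_rat \<bar>rat_of_int (2 ^ nat D) * pow2_point b $ i\<bar>) ` ?I
        = (\<lambda>i. 2 powi (D + b $ i)) ` ?I"
      by (rule image_cong[OF refl scaled]) simp
    moreover have "real_of_int (2 ^ nat D) = 2 powi D"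
      by (simp add: D_def power_int_def)
    ultimately show ?thesis by (simp add: image_image)
  qed
  also have "\<dots> = ln (2 powi Max (insert D ((\<lambda>i. D + b $ i) ` ?I)))"
    using fin by (subst mono_Max_commute) (auto intro!: monoI power_int_increasing)
  also have "Max (insert D ((\<lambda>i. D + b $ i) ` ?I)) = D + E"
    using fin ne Max_add_left[of "(\<lambda>i. b $ i) ` ?I" D]
    by (simp add: image_image E_def max_add_distrib_left)
  also have "ln ((2::real) powi (D + E)) = ln 2 * (of_int D + of_int E)"
    by (simp add: ln_power_int_2 mult.commute)
  also have "of_int D + of_int E = exponent_height N (\<lambda>i. of_int (b $ i))"
    using fin ne unfolding exponent_height_def D_def E_def
    by (simp add: of_int_Max image_image of_int_max add.commute)
  finally show ?thesis .
qed

lemma prod_power_int_eq_power_int_sum: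
  assumes "(x::'a::field) \<noteq> 0" "finite S"
  shows "(\<Prod>j\<in>S. x powi f j) = x powi (\<Sum>j\<in>S. f j)"
  using assms(2) by (induct S rule: finite_induct) (auto simp: power_int_add assms(1))

lemma mono_map_pow2_point:
  assumes A: "A \<in> carrier_mat N N" and b: "b \<in> carrier_vec N"
  shows "mono_map A (pow2_point b) = pow2_point (A *\<^sub>v b)"
proof (rule eq_vecI)
  fix i assume "i < dim_vec (pow2_point (A *\<^sub>v b))"
  then have i: "i < N" using A by (simp add: pow2_point_def)
  have "mono_map A (pow2_point b) $ i = (\<Prod>j<N. (2::rat) powi (A $$ (i,j) * b $ j))"
    using A b i by (simp add: mono_map_def pow2_point_def mult.commute power_int_mult)
  also have "\<dots> = 2 powi (\<Sum>j<N. A $$ (i,j) * b $ j)"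
    by (rule prod_power_int_eq_power_int_sum) auto
  also have "(\<Sum>j<N. A $$ (i,j) * b $ j) = (A *\<^sub>v b) $ i"
    using A b i by (simp add: mult_mat_vec_def scalar_prod_def atLeast0LessThan)
  finally show "mono_map A (pow2_point b) $ i = pow2_point (A *\<^sub>v b) $ i"
    using A i by (simp add: pow2_point_def)
qed (use A b in \<open>simp add: mono_map_def pow2_point_def\<close>)

lemma tendsto_Max_image:
  assumes "finite I" "I \<noteq> {}" "\<And>i. i \<in> I \<Longrightarrow> ((\<lambda>n. g n i) \<longlongrightarrow> (L i :: real)) F"
  shows "((\<lambda>n. Max (g n ` I)) \<longlongrightarrow> Max (L ` I)) F"
  using assms by (induct I rule: finite_ne_induct) (auto intro!: tendsto_max)

lemma tendsto_exponent_height: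
  assumes "N > 0" "\<And>i. i < N \<Longrightarrow> ((\<lambda>n. g n i) \<longlongrightarrow> L i) F"
  shows "((\<lambda>n. exponent_height N (g n)) \<longlongrightarrow> exponent_height N L) F"
  unfolding exponent_height_def using assms
  by (intro tendsto_add tendsto_max tendsto_const tendsto_Max_image tendsto_minus) auto

lemma exponent_height_divide:
  assumes "N > 0" "(c::real) > 0"
  shows "exponent_height N (\<lambda>i. f i / c) = exponent_height N f / c"
proof -
  have mono: "mono (\<lambda>x::real. x / c)" using assms by (intro monoI divide_right_mono) auto
  have Max_div: "Max ((\<lambda>i. h i / c) ` {..<N}) = Max (h ` {..<N}) / c" for h
    using mono_Max_commute[OF mono, of "h ` {..<N}"] assms(1) by (simp add: image_image lessThan_empty_iff)
  have "max 0 (x / c) = max 0 x / c" for x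
    using assms by (auto simp: max_def zero_le_divide_iff)
  then show ?thesis
    unfolding exponent_height_def Max_div[of f] Max_div[of "\<lambda>i. - f i", simplified]
    by (simp add: add_divide_distrib)
qed

lemma exponent_height_pos:
  assumes "i < N" "f i \<noteq> 0"
  shows "exponent_height N f > 0"
proof -
  have "f i \<le> Max (f ` {..<N})" "- f i \<le> Max ((\<lambda>i. - f i) ` {..<N})"
    using assms by (auto intro!: Max_ge)
  then show ?thesis unfolding exponent_height_def using assms(2) by linarith
qed

lemma exponent_height_le:
  assumes "N > 0" "\<And>i. i < N \<Longrightarrow> \<bar>f i\<bar> \<le> B"
  shows "exponent_height N f \<le> 2 * B"
proof -
  have "B \<ge> 0" using assms(2)[of 0] assms(1) by auto
  moreover have "Max (f ` {..<N}) \<le> B" "Max ((\<lambda>i. - f i) ` {..<N}) \<le> B"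
    using assms by (subst Max_le_iff; force simp: abs_le_iff)+
  ultimately show ?thesis unfolding exponent_height_def by auto
qed

section \<open>Small values of integral linear forms\<close>

lemma Dirichlet_approximation:
  fixes \<theta> :: real and M :: nat
  assumes "M > 0"
  obtains k h :: int where "k \<noteq> 0" "\<bar>of_int k * \<theta> - of_int h\<bar> < 1 / M"
proof -
  define f where "f k = \<lfloor>real M * frac (real k * \<theta>)\<rfloor>" for k :: nat
  have "f ` {0..M} \<subseteq> {0..<int M}"
    using assms by (auto simp: f_def frac_lt_1 floor_less_iff)
  then have "card (f ` {0..M}) < card {0..M}"
    using card_mono[of "{0..<int M}" "f ` {0..M}"] by simp
  then have "\<not> inj_on f {0..M}"
    using pigeonhole by blast
  then obtain k k' where kk: "k \<noteq> k'" "f k = f k'"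
    unfolding inj_on_def by blast
  then have "\<bar>real M * frac (real k * \<theta>) - real M * frac (real k' * \<theta>)\<bar> < 1"
    unfolding f_def by linarith
  then have "real M * \<bar>frac (real k * \<theta>) - frac (real k' * \<theta>)\<bar> < 1"
    by (simp add: abs_mult flip: right_diff_distrib)
  then have "\<bar>frac (real k * \<theta>) - frac (real k' * \<theta>)\<bar> < 1 / M"
    using assms by (simp add: pos_less_divide_eq mult.commute)
  then have "\<bar>of_int (int k - int k') * \<theta> - of_int (\<lfloor>real k * \<theta>\<rfloor> - \<lfloor>real k' * \<theta>\<rfloor>)\<bar> < 1 / M"
    by (simp add: frac_def algebra_simps)
  moreover have "int k - int k' \<noteq> 0" using kk by simp
  ultimately show thesis using that by blast
qed

lemma small_nonzero_int_combination:
  fixes t0 t1 :: real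
  assumes independent: "\<And>m n::int. m \<noteq> 0 \<or> n \<noteq> 0 \<Longrightarrow> of_int m * t0 + of_int n * t1 \<noteq> 0"
    and "\<eta> > 0"
  obtains m n :: int where "0 < \<bar>of_int m * t0 + of_int n * t1\<bar>" "\<bar>of_int m * t0 + of_int n * t1\<bar> < \<eta>"
proof -
  have t1: "t1 \<noteq> 0" using independent[of 0 1] by auto
  define M where "M = nat \<lceil>\<bar>t1\<bar> / \<eta>\<rceil> + 1"
  have M0: "M > 0" unfolding M_def by simp
  have "\<bar>t1\<bar> / \<eta> < real M" unfolding M_def by linarith
  then have M_small: "\<bar>t1\<bar> / real M < \<eta>"
    using \<open>\<eta> > 0\<close> M0 by (simp add: field_simps)
  obtain k h :: int where k: "k \<noteq> 0" and approx: "\<bar>of_int k * (t0 / t1) - of_int h\<bar> < 1 / M"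
    using Dirichlet_approximation[OF M0] .
  have "\<bar>of_int k * t0 + of_int (- h) * t1\<bar> = \<bar>t1\<bar> * \<bar>of_int k * (t0 / t1) - of_int h\<bar>"
    using t1 by (simp add: abs_mult[symmetric] field_simps)
  also have "\<dots> < \<bar>t1\<bar> * (1 / M)"
    using approx t1 by (intro mult_strict_left_mono) auto
  finally show thesis
    using that[of k "- h"] independent[of k "- h"] k M_small by auto
qed

lemma small_nonzero_linear_form_value:
  fixes t :: "nat \<Rightarrow> real"
  assumes "N \<ge> 2"
    and injective: "\<And>a. a \<in> carrier_vec N \<Longrightarrow> a \<noteq> 0\<^sub>v N \<Longrightarrow> (\<Sum>j<N. of_int (a $ j) * t j) \<noteq> 0"
    and "\<eta> > 0"
  obtains a where "a \<in> carrier_vec N" "0 < \<bar>\<Sum>j<N. of_int (a $ j) * t j\<bar>"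
    "\<bar>\<Sum>j<N. of_int (a $ j) * t j\<bar> < \<eta>"
proof -
  define v where "v m n = m \<cdot>\<^sub>v unit_vec N 0 + n \<cdot>\<^sub>v unit_vec N 1" for m n :: int
  have v: "v m n \<in> carrier_vec N" for m n by (simp add: v_def)
  have v_coord: "v m n $ j = (if j = 0 then m else 0) + (if j = 1 then n else 0)" if "j < N" for m n j
    using that by (auto simp: v_def unit_vec_def)
  have form: "(\<Sum>j<N. of_int (v m n $ j) * t j) = of_int m * t 0 + of_int n * t 1" for m n
  proof -
    have "(\<Sum>j<N. of_int (v m n $ j) * t j)
        = (\<Sum>j<N. (if j = 0 then of_int m * t j else 0) + (if j = 1 then of_int n * t j else 0))"
      by (rule sum.cong) (auto simp: v_coord)
    then show ?thesis using assms(1) by (simp add: sum.distrib)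
  qed
  have "of_int m * t 0 + of_int n * t 1 \<noteq> 0" if "m \<noteq> 0 \<or> n \<noteq> 0" for m n
  proof -
    have "v m n $ 0 = m" "v m n $ 1 = n" using v_coord[of 0] v_coord[of 1] assms(1) by auto
    then have "v m n \<noteq> 0\<^sub>v N" using that assms(1) by auto
    then show ?thesis using injective[OF v] form by simp
  qed
  then obtain m n where "0 < \<bar>of_int m * t 0 + of_int n * t 1\<bar>" "\<bar>of_int m * t 0 + of_int n * t 1\<bar> < \<eta>"
    using small_nonzero_int_combination \<open>\<eta> > 0\<close> by metis
  then show thesis using that[OF v] form by simp
qed

lemma infinite_small_positive_values:
  fixes f :: "'a \<Rightarrow> ereal"
  assumes small: "\<And>\<eta>. \<eta> > 0 \<Longrightarrow> \<exists>x. P x \<and> 0 < f x \<and> f x < ereal \<eta>" and "\<epsilon> > 0"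
  shows "infinite {x. P x \<and> 0 < f x \<and> f x < ereal \<epsilon>}" (is "infinite ?S")
proof
  assume "finite ?S"
  define \<mu> where "\<mu> = Min (insert (ereal \<epsilon>) (f ` ?S))"
  have \<mu>_le: "\<mu> \<le> f x" if "x \<in> ?S" for x
    using \<open>finite ?S\<close> that by (simp add: \<mu>_def)
  have "0 < \<mu>" "\<mu> \<le> ereal \<epsilon>"
    using \<open>finite ?S\<close> \<open>\<epsilon> > 0\<close> by (auto simp: \<mu>_def)
  then obtain \<eta> where \<eta>: "\<mu> = ereal \<eta>" "0 < \<eta>" "\<eta> \<le> \<epsilon>"
    by (cases \<mu>) auto
  then obtain x where "P x" "0 < f x" "f x < ereal \<eta>"
    using small by blast
  moreover from this have "x \<in> ?S" using \<eta>(3) by (auto intro: order.strict_trans2)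
  ultimately show False using \<mu>_le \<eta>(1) by fastforce
qed

lemma jordan_matrix_size_one:
  assumes "\<forall>(k, a) \<in> set n_as. k = 1"
  shows "jordan_matrix n_as = mat_diag (length n_as) (\<lambda>i. snd (n_as ! i))"
  using assms
proof (induct n_as)
  case (Cons ka n_as)
  obtain a where ka: "ka = (1, a)" using Cons.prems by (cases ka) auto
  have "sum_list (map fst n_as) = length n_as"
    using Cons.prems by (induct n_as) auto
  then have "jordan_matrix (ka # n_as) = four_block_mat (jordan_block 1 a) (0\<^sub>m 1 (length n_as))
      (0\<^sub>m (length n_as) 1) (mat_diag (length n_as) (\<lambda>i. snd (n_as ! i)))"
    using Cons by (simp add: ka jordan_matrix_Cons)
  also have "\<dots> = mat_diag (length (ka # n_as)) (\<lambda>i. snd ((ka # n_as) ! i))"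
    by (rule eq_matI) (auto simp: mat_diag_def ka nth_Cons')
  finally show ?case .
qed (auto simp: jordan_matrix_def mat_diag_def intro!: eq_matI)

lemma mat_diag_mult_vec_index:
  assumes "v \<in> carrier_vec n" "i < n"
  shows "(mat_diag n f *\<^sub>v v) $ i = f i * (v $ i :: 'a :: comm_ring_1)"
proof -
  have "(mat_diag n f *\<^sub>v v) $ i = (\<Sum>j\<in>{0..<n}. (if i = j then f j else 0) * v $ j)"
    using assms by (simp add: mat_diag_def scalar_prod_def)
  also have "\<dots> = f i * v $ i"
    using assms by (subst sum.remove[of _ i]) auto
  finally show ?thesis .
qed

lemma poly_prod_linear_powers_eq_0_iff:
  "poly (\<Prod>(n, a)\<leftarrow>n_as. [:- a, 1:] ^ n) (x::'a::idom) = 0 \<longleftrightarrow> (\<exists>(n, a) \<in> set n_as. n \<noteq> 0 \<and> a = x)"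
  by (induct n_as) auto

lemma spectrum_jordan_nf:
  fixes B :: "'a :: field mat"
  assumes "B \<in> carrier_mat n n" "jordan_nf B n_as"
  shows "spectrum B = snd ` set n_as"
proof -
  have "spectrum B = {x. \<exists>(k, a) \<in> set n_as. k \<noteq> 0 \<and> a = x}"
    unfolding spectrum_root_char_poly[OF assms(1)] jordan_nf_char_poly[OF assms(2)]
      poly_prod_linear_powers_eq_0_iff ..
  also have "\<dots> = snd ` set n_as"
    using assms(2) unfolding jordan_nf_def by force
  finally show ?thesis .
qed

lemma sum_list_eq_length_imp_all_one:
  assumes "\<forall>x \<in> set xs. (x::nat) \<ge> 1" "sum_list xs = length xs"
  shows "\<forall>x \<in> set xs. x = 1"
proof -
  have "length ys \<le> sum_list ys" if "\<forall>x \<in> set ys. (x::nat) \<ge> 1" for ys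
    using that by (induct ys) auto
  then show ?thesis using assms by (induct xs) fastforce+
qed

lemma jordan_nf_simple_spectrum:
  fixes B :: "'a :: field mat"
  assumes B: "B \<in> carrier_mat N N" and card: "card (spectrum B) = N" and jnf: "jordan_nf B n_as"
  shows "\<forall>(k, a) \<in> set n_as. k = 1" and "distinct (map snd n_as)" and "length n_as = N"
proof -
  have pos: "\<forall>k \<in> set (map fst n_as). k \<ge> 1"
    using jnf by (force simp: jordan_nf_def)
  obtain n where "B \<in> carrier_mat n n" "jordan_matrix n_as \<in> carrier_mat n n"
    using jnf similar_matD unfolding jordan_nf_def by blast
  then have "sum_list (map fst n_as) = N"
    using B jordan_matrix_carrier[of n_as] by (metis carrier_matD(1))
  moreover have "card (set (map snd n_as)) = N"
    using card spectrum_jordan_nf[OF B jnf] by simp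
  moreover have "length (map fst n_as) \<le> sum_list (map fst n_as)"
    using pos by (induct n_as) auto
  moreover have "card (set (map snd n_as)) \<le> length (map snd n_as)"
    by (rule card_length)
  ultimately have "sum_list (map fst n_as) = length (map fst n_as)"
    and "card (set (map snd n_as)) = length (map snd n_as)" by simp_all
  then show "\<forall>(k, a) \<in> set n_as. k = 1" and "distinct (map snd n_as)" and "length n_as = N"
    using sum_list_eq_length_imp_all_one[OF pos] card_distinct[of "map snd n_as"]
      \<open>sum_list _ = N\<close> by auto
qed

lemma irreducible_no_common_root:
  fixes \<chi> p :: "rat poly"
  assumes irr: "irreducible \<chi>" and "p \<noteq> 0" and "degree p < degree \<chi>"
    and root: "poly (map_poly of_rat \<chi>) (x::complex) = 0"
  shows "poly (map_poly of_rat p) x \<noteq> 0"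
proof
  assume p_root: "poly (map_poly of_rat p) x = 0"
  interpret of_rat_poly: map_poly_comm_ring_hom "of_rat :: rat \<Rightarrow> complex" ..
  have "\<not> \<chi> dvd p"
    using dvd_imp_degree_le[of \<chi> p] assms(2,3) by auto
  then have "gcd \<chi> p = 1"
    using irr field_poly_irreducible_imp_prime prime_elem_imp_coprime coprime_iff_gcd_eq_1 by blast
  then obtain u v where "u * \<chi> + v * p = 1"
    using bezout_coefficients_fst_snd[of \<chi> p] by auto
  then have "poly (map_poly (of_rat :: rat \<Rightarrow> complex) (u * \<chi> + v * p)) x = 1"
    by simp
  then show False
    using root p_root by (simp add: of_rat_poly.hom_add of_rat_poly.hom_mult)
qed

lemma int_mat_rational_kernel:
  fixes M :: "int mat"
  assumes M: "M \<in> carrier_mat N N" and v: "v \<in> carrier_vec N" "v \<noteq> 0\<^sub>v N"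
    and kernel: "transpose_mat (map_mat (of_int :: int \<Rightarrow> complex) M) *\<^sub>v v = 0\<^sub>v N"
  obtains c :: "rat vec" where "c \<in> carrier_vec N" "c \<noteq> 0\<^sub>v N" "map_mat of_int M *\<^sub>v c = 0\<^sub>v N"
proof -
  have "transpose_mat (map_mat (of_int :: int \<Rightarrow> complex) M) \<in> carrier_mat N N"
    using M by simp
  then have "det (transpose_mat (map_mat (of_int :: int \<Rightarrow> complex) M)) = 0"
    by (subst det_0_iff_vec_prod_zero) (use v kernel in auto)
  moreover have "det (transpose_mat (map_mat (of_int :: int \<Rightarrow> complex) M)) = of_int (det M)"
    using det_transpose[of "map_mat of_int M" N] M by (simp add: of_int_hom.hom_det)
  ultimately have "det M = 0" by simp
  then have "det (map_mat (of_int :: int \<Rightarrow> rat) M) = 0"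
    by (simp add: of_int_hom.hom_det)
  moreover have "map_mat (of_int :: int \<Rightarrow> rat) M \<in> carrier_mat N N"
    using M by simp
  ultimately obtain c :: "rat vec" where "c \<in> carrier_vec N" "c \<noteq> 0\<^sub>v N" "map_mat of_int M *\<^sub>v c = 0\<^sub>v N"
    using det_0_iff_vec_prod_zero by blast
  then show thesis by (rule that)
qed

definition mat_iter :: "'a :: semiring_0 mat \<Rightarrow> 'a vec \<Rightarrow> nat \<Rightarrow> 'a vec" where
  "mat_iter A a n = ((\<lambda>v. A *\<^sub>v v) ^^ n) a"

lemma mat_iter_0 [simp]: "mat_iter A a 0 = a"
  by (simp add: mat_iter_def)

lemma mat_iter_Suc [simp]: "mat_iter A a (Suc n) = A *\<^sub>v mat_iter A a n"
  by (simp add: mat_iter_def)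

lemma mat_iter_carrier [simp]:
  "A \<in> carrier_mat N N \<Longrightarrow> a \<in> carrier_vec N \<Longrightarrow> mat_iter A a n \<in> carrier_vec N"
  by (induct n) auto

lemma funpow_mono_map_pow2_point:
  assumes "A \<in> carrier_mat N N" "a \<in> carrier_vec N"
  shows "(mono_map A ^^ n) (pow2_point a) = pow2_point (mat_iter A a n)"
  using assms by (induct n) (simp_all add: mono_map_pow2_point)

section \<open>Orbits under a matrix with a simple dominant eigenvalue\<close>

locale dominant_diagonalization =
  fixes A :: "int mat" and N :: nat and P Q :: "complex mat" and \<mu> :: "nat \<Rightarrow> complex"
    and k0 :: nat
  assumes A_carrier: "A \<in> carrier_mat N N"
    and P_carrier: "P \<in> carrier_mat N N" and Q_carrier: "Q \<in> carrier_mat N N"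
    and PQ: "P * Q = 1\<^sub>m N" and QP: "Q * P = 1\<^sub>m N"
    and Q_cmat: "Q * cmat A = mat_diag N \<mu> * Q"
    and dominant_index: "k0 < N"
    and dominant_eigenvalue: "\<mu> k0 = of_real (delta_A A)"
    and delta_pos: "delta_A A > 0"
    and subdominant: "\<And>k. k < N \<Longrightarrow> k \<noteq> k0 \<Longrightarrow> cmod (\<mu> k) < delta_A A"
begin

definition dominant_coeff :: "int vec \<Rightarrow> complex" where
  "dominant_coeff a = (Q *\<^sub>v map_vec of_int a) $ k0"

(* The product below is real (dominant_term_real); Re only changes its type. *)
definition limit_vec :: "int vec \<Rightarrow> nat \<Rightarrow> real" where
  "limit_vec a i = Re (P $$ (i, k0) * dominant_coeff a)"

lemma eigen_coordinate_mat_iter: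
  assumes "a \<in> carrier_vec N" "k < N"
  shows "(Q *\<^sub>v map_vec of_int (mat_iter A a n)) $ k = \<mu> k ^ n * (Q *\<^sub>v map_vec of_int a) $ k"
proof (induct n)
  case (Suc n)
  let ?x = "map_vec (of_int :: int \<Rightarrow> complex) (mat_iter A a n)"
  have x: "?x \<in> carrier_vec N" using A_carrier assms(1) by simp
  have "Q *\<^sub>v map_vec of_int (mat_iter A a (Suc n)) = Q *\<^sub>v (cmat A *\<^sub>v ?x)"
    using A_carrier assms(1) by (simp add: cmat_def of_int_hom.mult_mat_vec_hom)
  also have "\<dots> = (Q * cmat A) *\<^sub>v ?x"
    using A_carrier Q_carrier x by (simp add: cmat_def assoc_mult_mat_vec)
  also have "\<dots> = mat_diag N \<mu> *\<^sub>v (Q *\<^sub>v ?x)"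
    using Q_carrier x by (simp add: Q_cmat assoc_mult_mat_vec[of _ N N Q N])
  finally show ?case
    using Suc Q_carrier x assms(2) by (simp add: mat_diag_mult_vec_index)
qed simp

lemma mat_iter_eigen_expansion:
  assumes "a \<in> carrier_vec N" "i < N"
  shows "of_int (mat_iter A a n $ i)
    = (\<Sum>k<N. P $$ (i, k) * (\<mu> k ^ n * (Q *\<^sub>v map_vec of_int a) $ k))"
proof -
  let ?x = "map_vec (of_int :: int \<Rightarrow> complex) (mat_iter A a n)"
  have x: "?x \<in> carrier_vec N" using A_carrier assms(1) by simp
  have "of_int (mat_iter A a n $ i) = ((P * Q) *\<^sub>v ?x) $ i"
  proof -
    have "dim_vec (mat_iter A a n) = N"
      using carrier_vecD[OF mat_iter_carrier[OF A_carrier assms(1)]] .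
    then show ?thesis using assms(2) x by (simp add: PQ)
  qed
  also have "\<dots> = (\<Sum>k<N. P $$ (i, k) * (Q *\<^sub>v ?x) $ k)"
    using P_carrier Q_carrier x assms(2)
    by (simp add: assoc_mult_mat_vec scalar_prod_def atLeast0LessThan)
  finally show ?thesis
    using assms(1) by (simp add: eigen_coordinate_mat_iter)
qed

lemma tendsto_mat_iter_div_power:
  assumes "a \<in> carrier_vec N" "i < N"
  shows "(\<lambda>n. of_real (of_int (mat_iter A a n $ i) / delta_A A ^ n))
    \<longlonglongrightarrow> P $$ (i, k0) * dominant_coeff a"
proof -
  let ?y = "Q *\<^sub>v map_vec of_int a" and ?\<delta> = "complex_of_real (delta_A A)"
  have limit_term: "(\<lambda>n. P $$ (i, k) * ((\<mu> k / ?\<delta>) ^ n * ?y $ k))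
      \<longlonglongrightarrow> (if k = k0 then P $$ (i, k) * ?y $ k else 0)" if "k < N" for k
  proof (cases "k = k0")
    case True
    then show ?thesis using dominant_eigenvalue delta_pos by simp
  next
    case False
    then have "cmod (\<mu> k / ?\<delta>) < 1"
      using subdominant[OF that] delta_pos by (simp add: norm_divide)
    then have "(\<lambda>n. (\<mu> k / ?\<delta>) ^ n) \<longlonglongrightarrow> 0"
      by (rule LIMSEQ_power_zero)
    from tendsto_mult_left_zero[OF tendsto_mult_right_zero[OF this]] show ?thesis
      using False by (simp add: mult.assoc)
  qed
  have "(\<lambda>n. \<Sum>k<N. P $$ (i, k) * ((\<mu> k / ?\<delta>) ^ n * ?y $ k))
      \<longlonglongrightarrow> (\<Sum>k<N. if k = k0 then P $$ (i, k) * ?y $ k else 0)"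
    by (rule tendsto_sum) (use limit_term in simp)
  moreover have "of_real (of_int (mat_iter A a n $ i) / delta_A A ^ n)
      = (\<Sum>k<N. P $$ (i, k) * ((\<mu> k / ?\<delta>) ^ n * ?y $ k))" for n
    using mat_iter_eigen_expansion[OF assms, of n]
    by (simp add: sum_divide_distrib power_divide)
  ultimately show ?thesis
    using dominant_index by (simp add: dominant_coeff_def)
qed

lemma dominant_term_real: "a \<in> carrier_vec N \<Longrightarrow> i < N \<Longrightarrow> Im (P $$ (i, k0) * dominant_coeff a) = 0"
  using tendsto_Im[OF tendsto_mat_iter_div_power] LIMSEQ_unique[OF tendsto_const] by fastforce

lemma tendsto_limit_vec:
  "a \<in> carrier_vec N \<Longrightarrow> i < N \<Longrightarrow> (\<lambda>n. of_int (mat_iter A a n $ i) / delta_A A ^ n) \<longlonglongrightarrow> limit_vec a i"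
  using tendsto_Re[OF tendsto_mat_iter_div_power] by (simp add: limit_vec_def)

lemma canon_height_pow2_point:
  assumes "ell_A A = 0" "a \<in> carrier_vec N"
  shows "canon_height A (pow2_point a) = ereal (ln 2 * exponent_height N (limit_vec a))"
proof -
  have N: "N > 0" using dominant_index by simp
  have "weil_height ((mono_map A ^^ n) (pow2_point a)) / (real n ^ ell_A A * delta_A A ^ n)
      = ln 2 * exponent_height N (\<lambda>i. of_int (mat_iter A a n $ i) / delta_A A ^ n)" for n
    using carrier_vecD[OF mat_iter_carrier[OF A_carrier assms(2)]] delta_pos assms(1)
    by (simp add: funpow_mono_map_pow2_point[OF A_carrier assms(2)] weil_height_pow2_point[OF _ N]
        exponent_height_divide[OF N])
  moreover have "(\<lambda>n. ereal (ln 2 * exponent_height N (\<lambda>i. of_int (mat_iter A a n $ i) / delta_A A ^ n)))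
      \<longlonglongrightarrow> ereal (ln 2 * exponent_height N (limit_vec a))"
    using assms(2) by (intro tendsto_ereal tendsto_mult tendsto_const tendsto_exponent_height N
        tendsto_limit_vec)
  ultimately show ?thesis
    unfolding canon_height_def by (simp add: lim_imp_Limsup)
qed

lemma dominant_column_nonzero: "\<exists>i<N. P $$ (i, k0) \<noteq> 0"
proof (rule ccontr)
  assume "\<not> (\<exists>i<N. P $$ (i, k0) \<noteq> 0)"
  then have "(Q * P) $$ (k0, k0) = 0"
    using Q_carrier P_carrier dominant_index by (simp add: scalar_prod_def)
  then show False using QP dominant_index by simp
qed

lemma cmod_dominant_term:
  "a \<in> carrier_vec N \<Longrightarrow> i < N \<Longrightarrow> cmod (P $$ (i, k0) * dominant_coeff a) = \<bar>limit_vec a i\<bar>"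
  using dominant_term_real by (simp add: limit_vec_def cmod_eq_Re)

lemma limit_vec_linear:
  assumes "a \<in> carrier_vec N"
  shows "limit_vec a i = (\<Sum>j<N. of_int (a $ j) * Re (P $$ (i, k0) * Q $$ (k0, j)))"
proof -
  have "P $$ (i, k0) * dominant_coeff a = (\<Sum>j<N. of_int (a $ j) * (P $$ (i, k0) * Q $$ (k0, j)))"
    using assms Q_carrier dominant_index
    by (simp add: dominant_coeff_def scalar_prod_def atLeast0LessThan sum_distrib_left algebra_simps)
  then show ?thesis by (simp add: limit_vec_def)
qed

lemma exponent_height_limit_vec_le:
  assumes "a \<in> carrier_vec N"
  shows "exponent_height N (limit_vec a) \<le> 2 * ((\<Sum>i<N. cmod (P $$ (i, k0))) * cmod (dominant_coeff a))"
proof (rule exponent_height_le)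
  fix i assume "i < N"
  then have "\<bar>limit_vec a i\<bar> = cmod (P $$ (i, k0)) * cmod (dominant_coeff a)"
    using assms by (simp flip: cmod_dominant_term add: norm_mult)
  also have "\<dots> \<le> (\<Sum>i<N. cmod (P $$ (i, k0))) * cmod (dominant_coeff a)"
    using \<open>i < N\<close> by (intro mult_right_mono member_le_sum) auto
  finally show "\<bar>limit_vec a i\<bar> \<le> (\<Sum>i<N. cmod (P $$ (i, k0))) * cmod (dominant_coeff a)" .
qed (use dominant_index in simp)

lemma exponent_height_limit_vec_pos:
  assumes "a \<in> carrier_vec N" "dominant_coeff a \<noteq> 0"
  shows "exponent_height N (limit_vec a) > 0"
proof -
  obtain i where "i < N" "P $$ (i, k0) \<noteq> 0" using dominant_column_nonzero by blast
  then have "limit_vec a i \<noteq> 0"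
    using assms cmod_dominant_term[of a i] by (auto simp: norm_mult)
  with \<open>i < N\<close> show ?thesis by (rule exponent_height_pos)
qed

lemma dominant_row_nonzero: "vec N (\<lambda>j. Q $$ (k0, j)) \<noteq> 0\<^sub>v N"
proof
  assume "vec N (\<lambda>j. Q $$ (k0, j)) = 0\<^sub>v N"
  then have "Q $$ (k0, j) = 0" if "j < N" for j
    using that by (simp add: vec_eq_iff)
  then have "(Q * P) $$ (k0, k0) = 0"
    using Q_carrier P_carrier dominant_index by (simp add: scalar_prod_def)
  then show False using QP dominant_index by simp
qed

lemma krylov_rational_relation:
  assumes a: "a \<in> carrier_vec N" and zero: "dominant_coeff a = 0"
  obtains c :: "rat vec" where "c \<in> carrier_vec N" "c \<noteq> 0\<^sub>v N"
    "\<And>i. i < N \<Longrightarrow> (\<Sum>m<N. of_rat (c $ m) * of_int (mat_iter A a m $ i)) = (0 :: complex)"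
proof -
  define M where "M = mat N N (\<lambda>(i, m). mat_iter A a m $ i)"
  have dim: "dim_vec (mat_iter A a m) = N" for m
    using carrier_vecD[OF mat_iter_carrier[OF A_carrier a]] .
  have M: "M \<in> carrier_mat N N" by (simp add: M_def)
  have kernel: "transpose_mat (map_mat of_int M) *\<^sub>v vec N (\<lambda>j. Q $$ (k0, j)) = 0\<^sub>v N"
  proof (rule eq_vecI)
    fix m assume "m < dim_vec (0\<^sub>v N :: complex vec)"
    then have "(transpose_mat (map_mat of_int M) *\<^sub>v vec N (\<lambda>j. Q $$ (k0, j))) $ m
        = (Q *\<^sub>v map_vec of_int (mat_iter A a m)) $ k0"
      using Q_carrier dominant_index dim by (simp add: M_def scalar_prod_def mult.commute)
    also have "\<dots> = 0"
      using a dominant_index zero by (simp add: eigen_coordinate_mat_iter dominant_coeff_def)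
    finally show "(transpose_mat (map_mat of_int M) *\<^sub>v vec N (\<lambda>j. Q $$ (k0, j))) $ m = 0\<^sub>v N $ m"
      using \<open>m < _\<close> by simp
  qed (simp add: M_def)
  obtain c :: "rat vec" where c: "c \<in> carrier_vec N" "c \<noteq> 0\<^sub>v N" "map_mat of_int M *\<^sub>v c = 0\<^sub>v N"
    by (rule int_mat_rational_kernel[OF M vec_carrier dominant_row_nonzero kernel])
  have "(\<Sum>m<N. of_rat (c $ m) * of_int (mat_iter A a m $ i)) = (0 :: complex)" if "i < N" for i
  proof -
    have "(\<Sum>m<N. c $ m * of_int (mat_iter A a m $ i)) = (map_mat of_int M *\<^sub>v c) $ i"
      using c(1) that by (simp add: M_def scalar_prod_def atLeast0LessThan mult.commute)
    then have "of_rat (\<Sum>m<N. c $ m * of_int (mat_iter A a m $ i)) = (0 :: complex)"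
      using c(3) that by simp
    then show ?thesis by (simp add: of_rat_sum of_rat_mult)
  qed
  with c(1,2) show thesis by (rule that)
qed

lemma eigen_coordinates_zero_imp_zero:
  assumes "a \<in> carrier_vec N" "Q *\<^sub>v map_vec of_int a = 0\<^sub>v N"
  shows "a = 0\<^sub>v N"
proof -
  have "map_vec (of_int :: int \<Rightarrow> complex) a = P *\<^sub>v (Q *\<^sub>v map_vec of_int a)"
    using P_carrier Q_carrier assms(1) by (simp add: PQ flip: assoc_mult_mat_vec)
  also have "\<dots> = 0\<^sub>v N"
    using P_carrier assms(2) by (intro eq_vecI) (simp_all add: scalar_prod_def)
  finally show ?thesis by simp
qed

lemma krylov_relation_trivial:
  assumes irr: "irreducible (map_poly (of_int :: int \<Rightarrow> rat) (char_poly A))"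
    and roots: "\<And>k. k < N \<Longrightarrow> poly (char_poly (cmat A)) (\<mu> k) = 0"
    and a: "a \<in> carrier_vec N" and c: "c \<in> carrier_vec N" "c \<noteq> 0\<^sub>v N"
    and rel: "\<And>i. i < N \<Longrightarrow> (\<Sum>m<N. of_rat (c $ m) * of_int (mat_iter A a m $ i)) = (0 :: complex)"
  shows "a = 0\<^sub>v N"
proof -
  interpret of_rat_poly: map_poly_comm_ring_hom "of_rat :: rat \<Rightarrow> complex" ..
  define p where "p = (\<Sum>m<N. monom (c $ m) m)"
  have coeff_p: "coeff p m = (if m < N then c $ m else 0)" for m
    by (simp add: p_def coeff_sum)
  have "p \<noteq> 0"
  proof
    assume "p = 0"
    then have "c $ m = 0" if "m < N" for m using coeff_p[of m] that by simp
    then show False using c by (auto intro: eq_vecI)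
  qed
  moreover have "degree p < degree (map_poly (of_int :: int \<Rightarrow> rat) (char_poly A))"
    using degree_monic_char_poly[OF A_carrier] dominant_index
    by (auto intro!: le_less_trans[OF degree_le[of "N - 1"]] simp: coeff_p)
  ultimately have p_nonroot: "poly (map_poly of_rat p) (\<mu> k) \<noteq> 0" if "k < N" for k
    using irreducible_no_common_root[OF irr] roots[OF that]
    by (simp add: map_poly_map_poly o_def cmat_def of_int_hom.char_poly_hom[OF A_carrier])
  let ?y = "Q *\<^sub>v map_vec of_int a"
  have "?y $ k = 0" if k: "k < N" for k
  proof -
    have "poly (map_poly of_rat p) (\<mu> k) * ?y $ k = (\<Sum>m<N. of_rat (c $ m) * (\<mu> k ^ m * ?y $ k))"
      by (simp add: p_def of_rat_poly.hom_sum poly_sum poly_monom sum_distrib_left mult_ac)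
    also have "\<dots> = (\<Sum>m<N. of_rat (c $ m) * (Q *\<^sub>v map_vec of_int (mat_iter A a m)) $ k)"
      using a k by (simp add: eigen_coordinate_mat_iter)
    also have "\<dots> = (\<Sum>m<N. \<Sum>i<N. Q $$ (k, i) * (of_rat (c $ m) * of_int (mat_iter A a m $ i)))"
      using k Q_carrier carrier_vecD[OF mat_iter_carrier[OF A_carrier a]]
      by (simp add: scalar_prod_def atLeast0LessThan sum_distrib_left mult_ac)
    also have "\<dots> = (\<Sum>i<N. Q $$ (k, i) * (\<Sum>m<N. of_rat (c $ m) * of_int (mat_iter A a m $ i)))"
      by (subst sum.swap) (simp add: sum_distrib_left)
    also have "\<dots> = 0" using rel by simp
    finally show ?thesis using p_nonroot[OF k] by simp
  qed
  then have "?y = 0\<^sub>v N" using Q_carrier by (intro eq_vecI) auto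
  then show ?thesis using a by (rule eigen_coordinates_zero_imp_zero[rotated])
qed

lemma dominant_coeff_nonzero:
  assumes "irreducible (map_poly (of_int :: int \<Rightarrow> rat) (char_poly A))"
    and "\<And>k. k < N \<Longrightarrow> poly (char_poly (cmat A)) (\<mu> k) = 0"
    and "a \<in> carrier_vec N" "a \<noteq> 0\<^sub>v N"
  shows "dominant_coeff a \<noteq> 0"
proof
  assume "dominant_coeff a = 0"
  then obtain c where "c \<in> carrier_vec N" "c \<noteq> 0\<^sub>v N"
    "\<And>i. i < N \<Longrightarrow> (\<Sum>m<N. of_rat (c $ m) * of_int (mat_iter A a m $ i)) = (0 :: complex)"
    using krylov_rational_relation[OF assms(3)] by blast
  then have "a = 0\<^sub>v N" using krylov_relation_trivial[OF assms(1-3)] by blast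
  with assms(4) show False ..
qed

lemma canon_height_pow2_point_pos:
  assumes "ell_A A = 0"
    and "irreducible (map_poly (of_int :: int \<Rightarrow> rat) (char_poly A))"
    and "\<And>k. k < N \<Longrightarrow> poly (char_poly (cmat A)) (\<mu> k) = 0"
    and "a \<in> carrier_vec N" "a \<noteq> 0\<^sub>v N"
  shows "0 < canon_height A (pow2_point a)"
  using canon_height_pow2_point[OF assms(1,4)] exponent_height_limit_vec_pos[OF assms(4)]
    dominant_coeff_nonzero[OF assms(2-5)] by simp

lemma canon_height_pow2_point_le:
  assumes "ell_A A = 0" "i0 < N" "P $$ (i0, k0) \<noteq> 0" "a \<in> carrier_vec N"
  shows "canon_height A (pow2_point a)
    \<le> ereal (2 * ln 2 * (\<Sum>i<N. cmod (P $$ (i, k0))) / cmod (P $$ (i0, k0)) * \<bar>limit_vec a i0\<bar>)"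
proof -
  have "cmod (dominant_coeff a) = \<bar>limit_vec a i0\<bar> / cmod (P $$ (i0, k0))"
    using cmod_dominant_term[OF assms(4,2)] assms(3) by (simp add: norm_mult field_simps)
  then have "ln 2 * (2 * ((\<Sum>i<N. cmod (P $$ (i, k0))) * cmod (dominant_coeff a)))
      = 2 * ln 2 * (\<Sum>i<N. cmod (P $$ (i, k0))) / cmod (P $$ (i0, k0)) * \<bar>limit_vec a i0\<bar>"
    by simp
  moreover have "ln 2 * exponent_height N (limit_vec a)
      \<le> ln 2 * (2 * ((\<Sum>i<N. cmod (P $$ (i, k0))) * cmod (dominant_coeff a)))"
    using exponent_height_limit_vec_le[OF assms(4)] by (intro mult_left_mono) auto
  ultimately show ?thesis
    using canon_height_pow2_point[OF assms(1,4)] by simp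
qed

lemma exists_small_positive_height:
  assumes "N \<ge> 2" "ell_A A = 0"
    and irr: "irreducible (map_poly (of_int :: int \<Rightarrow> rat) (char_poly A))"
    and roots: "\<And>k. k < N \<Longrightarrow> poly (char_poly (cmat A)) (\<mu> k) = 0"
    and "\<eta> > 0"
  shows "\<exists>a \<in> carrier_vec N. 0 < canon_height A (pow2_point a) \<and> canon_height A (pow2_point a) < ereal \<eta>"
proof -
  obtain i0 where i0: "i0 < N" "P $$ (i0, k0) \<noteq> 0" using dominant_column_nonzero by blast
  define C where "C = 2 * ln 2 * (\<Sum>i<N. cmod (P $$ (i, k0))) / cmod (P $$ (i0, k0))"
  have pos: "cmod (P $$ (i0, k0)) > 0" using i0 by simp
  have "cmod (P $$ (i0, k0)) \<le> (\<Sum>i<N. cmod (P $$ (i, k0)))"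
    using i0 by (intro member_le_sum) auto
  with pos have "(\<Sum>i<N. cmod (P $$ (i, k0))) > 0" by linarith
  with pos have "C > 0" unfolding C_def by simp
  define t where "t j = Re (P $$ (i0, k0) * Q $$ (k0, j))" for j
  have form: "limit_vec a i0 = (\<Sum>j<N. of_int (a $ j) * t j)" if "a \<in> carrier_vec N" for a
    using limit_vec_linear[OF that] by (simp add: t_def)
  obtain a where a: "a \<in> carrier_vec N" and "0 < \<bar>limit_vec a i0\<bar>" "\<bar>limit_vec a i0\<bar> < \<eta> / C"
  proof (rule small_nonzero_linear_form_value[OF assms(1), of t "\<eta> / C"])
    show "(\<Sum>j<N. of_int (a $ j) * t j) \<noteq> 0" if "a \<in> carrier_vec N" "a \<noteq> 0\<^sub>v N" for a
      using dominant_coeff_nonzero[OF irr roots that] cmod_dominant_term[OF that(1) i0(1)] i0(2)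
        form[OF that(1)] by (auto simp: norm_mult)
  qed (use \<open>\<eta> > 0\<close> \<open>C > 0\<close> form in auto)
  then have "a \<noteq> 0\<^sub>v N" by (auto simp: form)
  then have "0 < canon_height A (pow2_point a)"
    using canon_height_pow2_point_pos[OF assms(2) irr roots a] by blast
  moreover have "ereal (C * \<bar>limit_vec a i0\<bar>) < ereal \<eta>"
    using \<open>\<bar>limit_vec a i0\<bar> < \<eta> / C\<close> \<open>C > 0\<close> by (simp add: field_simps)
  with canon_height_pow2_point_le[OF assms(2) i0 a] have "canon_height A (pow2_point a) < ereal \<eta>"
    unfolding C_def by (rule order.strict_trans1)
  ultimately show ?thesis using a by blast
qed

end

section \<open>Matrices with simple positive spectrum\<close>

lemma complex_jordan_nf_exists:
  fixes B :: "complex mat"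
  assumes "B \<in> carrier_mat n n"
  obtains n_as where "jordan_nf B n_as"
  using char_poly_factorized[OF assms] jordan_nf_exists[OF assms] by blast

lemma simple_spectrum_diagonalization:
  fixes B :: "complex mat"
  assumes B: "B \<in> carrier_mat N N" and card: "card (spectrum B) = N"
  obtains P Q \<mu> where "similar_mat_wit B (mat_diag N \<mu>) P Q" "\<mu> ` {..<N} = spectrum B"
    "inj_on \<mu> {..<N}"
proof -
  obtain n_as where jnf: "jordan_nf B n_as" using complex_jordan_nf_exists[OF B] .
  define \<mu> where "\<mu> = (\<lambda>i. snd (n_as ! i))"
  note simple = jordan_nf_simple_spectrum[OF B card jnf]
  have "jordan_matrix n_as = mat_diag N \<mu>"
    using jordan_matrix_size_one[OF simple(1)] simple(3) by (simp add: \<mu>_def)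
  then obtain P Q where "similar_mat_wit B (mat_diag N \<mu>) P Q"
    using jnf by (auto simp: jordan_nf_def similar_mat_def)
  moreover have "\<mu> ` {..<N} = spectrum B"
  proof -
    have "map \<mu> [0..<N] = map snd n_as"
      using simple(3) by (simp add: \<mu>_def list_eq_iff_nth_eq)
    then show ?thesis
      using spectrum_jordan_nf[OF B jnf] by (metis atLeast_upt list.set_map)
  qed
  moreover have "inj_on \<mu> {..<N}"
    using simple(2,3) by (auto simp: \<mu>_def inj_on_def distinct_conv_nth)
  ultimately show thesis by (rule that)
qed

lemma simple_dominant_eigenvalue:
  fixes B :: "complex mat"
  assumes B: "B \<in> carrier_mat N N" and "N > 0"
    and positive: "\<And>w. w \<in> spectrum B \<Longrightarrow> w \<in> \<real> \<and> Re w > 0"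
    and \<mu>: "\<mu> ` {..<N} = spectrum B" "inj_on \<mu> {..<N}"
  obtains k0 where "k0 < N" "\<mu> k0 = of_real (spectral_radius B)" "spectral_radius B > 0"
    "\<And>k. k < N \<Longrightarrow> k \<noteq> k0 \<Longrightarrow> cmod (\<mu> k) < spectral_radius B"
proof -
  have real: "w = of_real (cmod w)" "cmod w > 0" if "w \<in> spectrum B" for w
    using positive[OF that] by (auto elim!: Reals_cases)
  obtain w where w: "w \<in> spectrum B" "spectral_radius B = cmod w"
    using spectral_radius_mem_max(1)[OF B \<open>N > 0\<close>] by auto
  then obtain k0 where k0: "k0 < N" "cmod (\<mu> k0) = spectral_radius B"
    using \<mu>(1) by (metis imageE lessThan_iff)
  then have eigen: "\<mu> k0 = of_real (spectral_radius B)" "spectral_radius B > 0"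
    using real[of "\<mu> k0"] \<mu>(1) by auto
  have "cmod (\<mu> k) < spectral_radius B" if "k < N" "k \<noteq> k0" for k
  proof -
    have "\<mu> k \<in> spectrum B" using \<mu>(1) that(1) by auto
    then have "cmod (\<mu> k) \<le> spectral_radius B" "\<mu> k = of_real (cmod (\<mu> k))"
      using spectral_radius_mem_max(2)[OF B \<open>N > 0\<close>] real by auto
    moreover have "\<mu> k \<noteq> \<mu> k0"
      using \<mu>(2) that k0(1) by (auto simp: inj_on_def)
    ultimately show ?thesis using eigen(1) by (metis order_le_neq_trans)
  qed
  with k0(1) eigen show thesis by (rule that)
qed

lemma dominant_diagonalization_exists:
  assumes "N > 0" and A: "A \<in> carrier_mat N N"
    and positive: "\<forall>k. eigenvalue (cmat A) k \<longrightarrow> k \<in> \<real> \<and> Re k > 0"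
    and card: "card (spectrum (cmat A)) = N"
  obtains P Q \<mu> k0 where "dominant_diagonalization A N P Q \<mu> k0"
    "\<And>k. k < N \<Longrightarrow> poly (char_poly (cmat A)) (\<mu> k) = 0"
proof -
  have B: "cmat A \<in> carrier_mat N N" using A by (simp add: cmat_def)
  obtain P Q \<mu> where wit: "similar_mat_wit (cmat A) (mat_diag N \<mu>) P Q"
    and \<mu>: "\<mu> ` {..<N} = spectrum (cmat A)" "inj_on \<mu> {..<N}"
    using simple_spectrum_diagonalization[OF B card] .
  obtain k0 where k0: "k0 < N" "\<mu> k0 = of_real (delta_A A)" "delta_A A > 0"
    "\<And>k. k < N \<Longrightarrow> k \<noteq> k0 \<Longrightarrow> cmod (\<mu> k) < delta_A A"
    using simple_dominant_eigenvalue[OF B \<open>N > 0\<close> _ \<mu>] positive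
    unfolding delta_A_def spectrum_def by blast
  have PQ: "P \<in> carrier_mat N N" "Q \<in> carrier_mat N N" "P * Q = 1\<^sub>m N" "Q * P = 1\<^sub>m N"
    and A_eq: "cmat A = P * mat_diag N \<mu> * Q"
    using wit B by (auto simp: similar_mat_wit_def Let_def)
  have "Q * cmat A = Q * (P * (mat_diag N \<mu> * Q))"
    unfolding A_eq using PQ(1,2) by (simp add: assoc_mult_mat[of P N N _ N Q N])
  also have "\<dots> = (Q * P) * (mat_diag N \<mu> * Q)"
    using PQ(1,2) by (intro assoc_mult_mat[symmetric, of _ N N _ N _ N] mult_carrier_mat) auto
  also have "\<dots> = mat_diag N \<mu> * Q"
    using PQ by (simp add: left_mult_one_mat[of _ N N] mult_carrier_mat[of _ N N Q N])
  finally have "Q * cmat A = mat_diag N \<mu> * Q" .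
  then have "dominant_diagonalization A N P Q \<mu> k0"
    unfolding dominant_diagonalization_def using A PQ k0 by blast
  moreover have "poly (char_poly (cmat A)) (\<mu> k) = 0" if "k < N" for k
    using \<mu>(1) that spectrum_root_char_poly[OF B] by auto
  ultimately show thesis by (rule that)
qed

lemma ell_A_simple_spectrum:
  assumes "N > 0" and A: "A \<in> carrier_mat N N" and card: "card (spectrum (cmat A)) = N"
  shows "ell_A A = 0"
proof -
  have B: "cmat A \<in> carrier_mat N N" using A by (simp add: cmat_def)
  have "{k - 1 | k a n_as. jordan_nf (cmat A) n_as \<and> (k, a) \<in> set n_as \<and> cmod a = delta_A A} = {0}"
  proof (intro equalityI subsetI)
    fix x assume "x \<in> {k - 1 | k a n_as. jordan_nf (cmat A) n_as \<and> (k, a) \<in> set n_as \<and> cmod a = delta_A A}"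
    then obtain k a n_as where x: "x = k - 1" and jnf: "jordan_nf (cmat A) n_as"
      and "(k, a) \<in> set n_as" by blast
    then have "k = 1" using jordan_nf_simple_spectrum(1)[OF B card jnf] by auto
    with x show "x \<in> {0}" by simp
  next
    fix x :: nat assume "x \<in> {0}"
    obtain n_as where jnf: "jordan_nf (cmat A) n_as" using complex_jordan_nf_exists[OF B] .
    obtain a where "a \<in> spectrum (cmat A)" "cmod a = delta_A A"
      using spectral_radius_mem_max(1)[OF B \<open>N > 0\<close>] unfolding delta_A_def by auto
    moreover from this obtain k where "(k, a) \<in> set n_as"
      using spectrum_jordan_nf[OF B jnf] by auto
    moreover from this have "k = 1" using jordan_nf_simple_spectrum(1)[OF B card jnf] by auto
    ultimately show "x \<in> {k - 1 | k a n_as. jordan_nf (cmat A) n_as \<and> (k, a) \<in> set n_as \<and> cmod a = delta_A A}"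
      using jnf \<open>x \<in> {0}\<close> by auto
  qed
  then show ?thesis by (simp add: ell_A_def)
qed

theorem mainTheorem1:
  fixes A :: "int mat" and N :: nat and \<epsilon> :: real
  assumes "N \<ge> 2"
    and "A \<in> carrier_mat N N"
    and "det A \<noteq> 0"
    and "irreducible (map_poly (of_int :: int \<Rightarrow> rat) (char_poly A))"
    and "\<forall>k. eigenvalue (cmat A) k \<longrightarrow> k \<in> \<real> \<and> Re k > 0"
    and "card (spectrum (cmat A)) = N"
    and "\<epsilon> > 0"
  shows "infinite {P :: rat vec. P \<in> carrier_vec N \<and> (\<forall>i<N. P $ i \<noteq> 0)
                   \<and> 0 < canon_height A P \<and> canon_height A P < ereal \<epsilon>}"
proof -
  have "N > 0" using assms(1) by simp
  obtain P Q \<mu> k0 where diag: "dominant_diagonalization A N P Q \<mu> k0"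
    and roots: "\<And>k. k < N \<Longrightarrow> poly (char_poly (cmat A)) (\<mu> k) = 0"
    using dominant_diagonalization_exists[OF \<open>N > 0\<close> assms(2,5,6)] by blast
  interpret dominant_diagonalization A N P Q \<mu> k0 by (rule diag)
  have small: "\<exists>P. (P \<in> carrier_vec N \<and> (\<forall>i<N. P $ i \<noteq> 0)) \<and> 0 < canon_height A P
      \<and> canon_height A P < ereal \<eta>" if "\<eta> > 0" for \<eta>
  proof -
    obtain a where "a \<in> carrier_vec N" "0 < canon_height A (pow2_point a)"
      "canon_height A (pow2_point a) < ereal \<eta>"
      using exists_small_positive_height[OF assms(1) ell_A_simple_spectrum[OF \<open>N > 0\<close> assms(2,6)]
          assms(4) roots \<open>\<eta> > 0\<close>] by blast
    then show ?thesis by (intro exI[of _ "pow2_point a"]) (auto simp: pow2_point_def)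
  qed
  show ?thesis
    using infinite_small_positive_values[OF small \<open>\<epsilon> > 0\<close>] by (simp add: conj_assoc)
qed

end
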